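(* Let $p>1$, $q>0$, let $F$ be the CDF of the log-logistic distribution $GBP(1,1,p,q)$, and let $y>0$. Then $$\mathrm{CRPS}(F\mid y) = \frac{p-1}{p^2}\cdot\frac{q\pi}{\sin(\pi/p)} + y\left(1-\frac{2q^p}{q^p+y^p}\;{}_2F_1\!\left(1,1;1+\tfrac1p;\frac{y^p}{q^p+y^p}\right)\right).$$
   Context: The generalized Beta-prime distribution $GBP(\alpha,\beta,p,q)$ with parameters $\alpha,\beta,p,q>0$ is the distribution on $(0,\infty)$ with density $p_Z(z)=\frac{p}{qB(\alpha,\beta)}\frac{(z/q)^{\alpha p-1}}{(1+(z/q)^p)^{\alpha+\beta}}$ for $z>0$; the log-logistic distribution is the case $\alpha=\beta=1$. For a CDF $F$ and observation $y\in\mathbb R$, $\mathrm{CRPS}(F\mid y)=\int_{\mathbb R}(F(x)-H(x-y))^2\,dx$ with $H$ the Heaviside step function. ${}_2F_1$ is the Gauss hypergeometric function. *)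

theory Defs
  imports "HOL-Analysis.Analysis"
begin

definition gbp_density :: "real \<Rightarrow> real \<Rightarrow> real \<Rightarrow> real \<Rightarrow> real \<Rightarrow> real" where
  "gbp_density \<alpha> \<beta> p q z =
     (if z > 0 then p / (q * Beta \<alpha> \<beta>) * (z / q) powr (\<alpha> * p - 1)
                    / (1 + (z / q) powr p) powr (\<alpha> + \<beta>)
      else 0)"

definition gbp_cdf :: "real \<Rightarrow> real \<Rightarrow> real \<Rightarrow> real \<Rightarrow> real \<Rightarrow> real" where
  "gbp_cdf \<alpha> \<beta> p q x = integral {..x} (gbp_density \<alpha> \<beta> p q)"

text \<open>Heaviside step function (value at 0 is irrelevant for the integral).\<close>
definition heaviside :: "real \<Rightarrow> real" where
  "heaviside x = (if x \<ge> 0 then 1 else 0)"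

definition hyp2F1 :: "real \<Rightarrow> real \<Rightarrow> real \<Rightarrow> real \<Rightarrow> real" where
  "hyp2F1 a b c z =
     (\<Sum>n. pochhammer a n * pochhammer b n / (pochhammer c n * fact n) * z ^ n)"

end

theory Submission
  imports Defs
begin

text \<open>On \<open>(0, \<infinity>)\<close> the log-logistic CDF is \<open>F(x) = x^p / (q^p + x^p)\<close>, so the CRPS
  integrand is \<open>F\<^sup>2\<close> on \<open>(0, y)\<close> and \<open>(1 - F)\<^sup>2\<close> on \<open>(y, \<infinity>)\<close>. Both have closed-form
  antiderivatives built from \<open>\<Psi>(x) = x (1 - F(x)) S(F(x))\<close> with \<open>S = \<^sub>2F\<^sub>1(1,1;1+s;-)\<close>,
  \<open>s = 1/p\<close>: the first-order equation \<open>z (1 - z) S' = s - (s - z) S\<close> gives \<open>\<Psi>' = 1 - F\<close>,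
  and \<open>K = (1 - s) \<Psi> + s x (1 - F)\<close> has \<open>K' = (1 - F)\<^sup>2\<close>.
  The value \<open>\<Psi>(\<infinity>) = q (\<pi>/p) / sin (\<pi>/p)\<close> comes from the Abelian asymptotic
  \<open>(1 - z)\<^bsup>1-s\<^esup> S(z) \<longrightarrow> \<pi> s / sin (\<pi> s)\<close> as \<open>z \<longrightarrow> 1\<^sup>-\<close>: the coefficients \<open>n! / (1+s)\<^sub>n\<close> of \<open>S\<close>,
  divided by the coefficients \<open>(1-s)\<^sub>n / n!\<close> of \<open>(1 - z)\<^bsup>s-1\<^esup>\<close>, are the inverse partial
  products of Euler's product for \<open>sin (\<pi> s) / (\<pi> s)\<close>. The identity
  \<open>x (1 - F) = q F\<^bsup>1/p\<^esup> (1 - F)\<^bsup>1-1/p\<^esup>\<close> transfers it to \<open>x \<longrightarrow> \<infinity>\<close>.\<close>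

section \<open>The series \<open>\<^sub>2F\<^sub>1(1,1;1+s;z)\<close>\<close>

definition hyp2F1_11_coeff :: "real \<Rightarrow> nat \<Rightarrow> real" where
  "hyp2F1_11_coeff s n = fact n / pochhammer (1 + s) n"

lemma hyp2F1_11_eq_suminf: "hyp2F1 1 1 (1 + s) z = (\<Sum>n. hyp2F1_11_coeff s n * z ^ n)"
  unfolding hyp2F1_def hyp2F1_11_coeff_def by (simp add: pochhammer_fact[symmetric])

lemma hyp2F1_11_coeff_pos: "s > -1 \<Longrightarrow> hyp2F1_11_coeff s n > 0"
  unfolding hyp2F1_11_coeff_def by (intro divide_pos_pos pochhammer_pos) auto

lemma fact_le_pochhammer: "(s::real) \<ge> 0 \<Longrightarrow> fact n \<le> pochhammer (1 + s) n"
proof (induction n)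
  case (Suc n)
  have "fact (Suc n) = fact n * (1 + real n)" by (simp add: algebra_simps)
  also have "\<dots> \<le> pochhammer (1 + s) n * (1 + s + real n)"
    using Suc pochhammer_pos[of "1 + s" n] by (intro mult_mono) auto
  finally show ?case by (simp add: pochhammer_Suc)
qed simp

lemma hyp2F1_11_coeff_le_1: "s \<ge> 0 \<Longrightarrow> hyp2F1_11_coeff s n \<le> 1"
  unfolding hyp2F1_11_coeff_def using fact_le_pochhammer[of s n] pochhammer_pos[of "1 + s" n]
  by (simp add: divide_le_eq)

lemma hyp2F1_11_coeff_Suc:
  "s > -1 \<Longrightarrow> (s + real n + 1) * hyp2F1_11_coeff s (Suc n) = (real n + 1) * hyp2F1_11_coeff s n"
proof -
  assume "s > -1"
  then have "pochhammer (1 + s) n > 0" "s + real n + 1 > 0"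
    by (auto intro: pochhammer_pos)
  then show ?thesis
    unfolding hyp2F1_11_coeff_def by (simp add: pochhammer_Suc add_ac)
qed

lemma summable_hyp2F1_11_coeff:
  assumes "s \<ge> 0" "norm z < 1" shows "summable (\<lambda>n. hyp2F1_11_coeff s n * z ^ n)"
proof (rule summable_comparison_test'[where g = "\<lambda>n. norm z ^ n"])
  show "summable (\<lambda>n. norm z ^ n)" using assms by (simp add: summable_geometric)
  show "norm (hyp2F1_11_coeff s n * z ^ n) \<le> norm z ^ n" for n
    using hyp2F1_11_coeff_pos[of s n] hyp2F1_11_coeff_le_1[of s n] assms
    by (simp add: abs_mult power_abs mult_left_le_one_le)
qed

lemma has_real_derivative_hyp2F1_11:
  assumes s: "s \<ge> 0" and z: "\<bar>z\<bar> < 1" "z \<noteq> 0"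
  shows "(hyp2F1 1 1 (1 + s) has_real_derivative
            (s - (s - z) * hyp2F1 1 1 (1 + s) z) / (z * (1 - z))) (at z)"
proof -
  let ?c = "hyp2F1_11_coeff s"
  define S where "S = hyp2F1 1 1 (1 + s) z"
  define S' where "S' = (\<Sum>n. diffs ?c n * z ^ n)"
  have deriv: "(hyp2F1 1 1 (1 + s) has_real_derivative S') (at z)"
    unfolding hyp2F1_11_eq_suminf[abs_def] S'_def
    by (rule termdiffs_strong'[where K = 1]) (use assms summable_hyp2F1_11_coeff in auto)
  have "summable (\<lambda>n. diffs ?c n * z ^ n)"
    by (rule termdiff_converges[where K = 1]) (use assms summable_hyp2F1_11_coeff in auto)
  then have "(\<lambda>n. z * (diffs ?c n * z ^ n)) sums (z * S')"
    unfolding S'_def by (intro sums_mult summable_sums)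
  then have "(\<lambda>n. real (Suc n) * ?c (Suc n) * z ^ Suc n) sums (z * S')"
    by (simp add: diffs_def algebra_simps)
  then have W: "(\<lambda>n. real n * ?c n * z ^ n) sums (z * S')"
    by (subst (asm) sums_Suc_iff) simp
  have S: "(\<lambda>n. ?c n * z ^ n) sums S"
    unfolding S_def hyp2F1_11_eq_suminf using summable_hyp2F1_11_coeff[of s z] assms
    by (simp add: summable_sums)
  have lhs: "(\<lambda>n. (s + real n) * ?c n * z ^ n) sums (s * S + z * S')"
    using sums_add[OF sums_mult[OF S, of s] W] by (simp add: algebra_simps)
  have "(\<lambda>n. z * ((1 + real n) * ?c n * z ^ n)) sums (z * (S + z * S'))"
    using sums_add[OF S W] by (intro sums_mult) (simp add: algebra_simps)
  then have "(\<lambda>n. (s + real (Suc n)) * ?c (Suc n) * z ^ Suc n) sums (z * (S + z * S'))"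
    using hyp2F1_11_coeff_Suc[of s] s by (simp add: algebra_simps)
  txt \<open>Re-indexing by the recurrence gives a second value of \<open>\<Sum> (s + n) c\<^sub>n z\<^sup>n\<close>.\<close>
  then have "(\<lambda>n. (s + real n) * ?c n * z ^ n) sums (z * (S + z * S') + s)"
    by (subst (asm) sums_Suc_iff) (simp add: hyp2F1_11_coeff_def)
  then have "s * S + z * S' = z * (S + z * S') + s"
    using sums_unique2[OF lhs] by simp
  then have "S' = (s - (s - z) * S) / (z * (1 - z))"
    using z by (simp add: field_simps)
  with deriv show ?thesis unfolding S_def by simp
qed

lemma isCont_hyp2F1_11:
  assumes "s \<ge> 0" "\<bar>z\<bar> < 1"
  shows "isCont (hyp2F1 1 1 (1 + s)) z"
proof -
  have "summable (\<lambda>n. hyp2F1_11_coeff s n * ((1 + \<bar>z\<bar>) / 2) ^ n)"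
    using assms by (intro summable_hyp2F1_11_coeff) auto
  moreover have "norm z < norm ((1 + \<bar>z\<bar>) / 2)"
    using assms by simp
  ultimately show ?thesis
    unfolding hyp2F1_11_eq_suminf[abs_def] by (rule isCont_powser)
qed

section \<open>An Abelian theorem and the behaviour at \<open>z = 1\<close>\<close>

lemma power_series_tail_bound:
  fixes c d :: "nat \<Rightarrow> real" and z e :: real
  assumes tail: "\<And>n. n \<ge> N \<Longrightarrow> \<bar>c n\<bar> \<le> e * d n"
    and d: "\<And>n. d n \<ge> 0" and z: "0 \<le> z" "z \<le> 1" and e: "e \<ge> 0"
    and sums_d: "(\<lambda>n. d n * z ^ n) sums D"
  shows "summable (\<lambda>n. c n * z ^ n)"
    and "\<bar>\<Sum>n. c n * z ^ n\<bar> \<le> (\<Sum>n<N. \<bar>c n\<bar>) + e * D"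
proof -
  define g where "g n = (if n < N then \<bar>c n\<bar> else 0) + e * (d n * z ^ n)" for n
  have g: "g sums ((\<Sum>n<N. \<bar>c n\<bar>) + e * D)"
    using sums_If_finite_set[of "{..<N}" "\<lambda>n. \<bar>c n\<bar>"]
    unfolding g_def by (intro sums_add sums_mult sums_d) auto
  have le: "\<bar>c n * z ^ n\<bar> \<le> g n" for n
  proof (cases "n < N")
    case True
    have "\<bar>c n\<bar> * z ^ n \<le> \<bar>c n\<bar>"
      using z by (intro mult_left_le power_le_one) auto
    moreover have "0 \<le> e * (d n * z ^ n)"
      using z d[of n] e by simp
    ultimately show ?thesis using True z by (simp add: g_def abs_mult)
  next
    case False
    then have "\<bar>c n\<bar> * z ^ n \<le> e * d n * z ^ n"
      using tail[of n] z by (intro mult_right_mono) auto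
    then show ?thesis using False z by (simp add: g_def abs_mult mult.assoc)
  qed
  have summable: "summable (\<lambda>n. \<bar>c n * z ^ n\<bar>)"
    using le by (intro summable_comparison_test'[OF sums_summable[OF g]]) auto
  then show "summable (\<lambda>n. c n * z ^ n)"
    by (rule summable_rabs_cancel)
  have "\<bar>\<Sum>n. c n * z ^ n\<bar> \<le> (\<Sum>n. \<bar>c n * z ^ n\<bar>)"
    using summable by (rule summable_rabs)
  also have "\<dots> \<le> (\<Sum>n. g n)"
    using le summable sums_summable[OF g] by (intro suminf_le) auto
  finally show "\<bar>\<Sum>n. c n * z ^ n\<bar> \<le> (\<Sum>n<N. \<bar>c n\<bar>) + e * D"
    using g by (simp add: sums_iff)
qed

lemma power_series_ratio_tendsto_at_left_1:
  fixes c d :: "nat \<Rightarrow> real" and D :: "real \<Rightarrow> real"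
  assumes d_pos: "\<And>n. d n > 0"
    and ratio: "(\<lambda>n. c n / d n) \<longlonglongrightarrow> L"
    and sums_d: "\<And>z. 0 \<le> z \<Longrightarrow> z < 1 \<Longrightarrow> (\<lambda>n. d n * z ^ n) sums D z"
    and D_top: "filterlim D at_top (at_left 1)"
  shows "((\<lambda>z. (\<Sum>n. c n * z ^ n) / D z) \<longlongrightarrow> L) (at_left 1)"
proof (rule tendstoI)
  fix e :: real assume e: "e > 0"
  define c' where "c' n = c n - L * d n" for n
  obtain N where N: "\<And>n. n \<ge> N \<Longrightarrow> \<bar>c n / d n - L\<bar> < e / 2"
    using tendstoD[OF ratio, of "e / 2"] e
    by (auto simp: eventually_sequentially dist_real_def)
  have tail: "\<bar>c' n\<bar> \<le> e / 2 * d n" if "n \<ge> N" for n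
  proof -
    have "c' n = (c n / d n - L) * d n"
      using d_pos[of n] by (simp add: c'_def field_simps)
    then show ?thesis
      using N[OF that] d_pos[of n] by (simp add: abs_mult)
  qed
  define B where "B = (\<Sum>n<N. \<bar>c' n\<bar>)"
  have B: "B \<ge> 0" unfolding B_def by (intro sum_nonneg) auto
  have "eventually (\<lambda>z. D z > 2 * B / e) (at_left (1::real))"
    using D_top by (simp add: filterlim_at_top_dense)
  moreover have "eventually (\<lambda>z. z \<in> {0<..<1}) (at_left (1::real))"
    by (rule eventually_at_left_real) simp
  ultimately show "eventually (\<lambda>z. dist ((\<Sum>n. c n * z ^ n) / D z) L < e) (at_left 1)"
  proof eventually_elim
    case (elim z)
    then have z: "0 < z" "z < 1" by auto
    have "2 * B < e * D z" using elim(1) e by (simp add: pos_divide_less_eq mult.commute)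
    then have B_less: "B < e / 2 * D z" by simp
    with B have "0 < e / 2 * D z" by linarith
    then have D_pos: "D z > 0" using e by (simp add: zero_less_mult_iff)
    have d_nonneg: "d n \<ge> 0" for n using d_pos[of n] by simp
    have bound: "summable (\<lambda>n. c' n * z ^ n)" "\<bar>\<Sum>n. c' n * z ^ n\<bar> \<le> B + e / 2 * D z"
      using power_series_tail_bound[where z = z, OF tail d_nonneg] z e sums_d[of z]
      unfolding B_def by auto
    have "(\<lambda>n. c' n * z ^ n + L * (d n * z ^ n)) sums ((\<Sum>n. c' n * z ^ n) + L * D z)"
      using bound(1) z e by (intro sums_add sums_mult summable_sums sums_d) auto
    then have "(\<Sum>n. c n * z ^ n) = (\<Sum>n. c' n * z ^ n) + L * D z"
      by (simp add: c'_def algebra_simps sums_iff)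
    with bound(2) have "\<bar>(\<Sum>n. c n * z ^ n) - L * D z\<bar> < e * D z"
      using B_less by simp
    then have "\<bar>(\<Sum>n. c n * z ^ n) - L * D z\<bar> / D z < e"
      using D_pos by (simp add: pos_divide_less_eq)
    moreover have "(\<Sum>n. c n * z ^ n) / D z - L = ((\<Sum>n. c n * z ^ n) - L * D z) / D z"
      using D_pos by (simp add: diff_divide_distrib)
    ultimately show ?case
      using D_pos by (simp add: dist_real_def)
  qed
qed

lemma sums_pochhammer_div_fact_powr:
  fixes a z :: real
  assumes "\<bar>z\<bar> < 1"
  shows "(\<lambda>n. pochhammer a n / fact n * z ^ n) sums (1 - z) powr (- a)"
proof -
  have "(\<lambda>n. ((- a) gchoose n) * (- z) ^ n) sums (1 + - z) powr (- a)"
    using assms by (intro gen_binomial_real) simp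
  moreover have "((- a) gchoose n) * (- z) ^ n = pochhammer a n / fact n * z ^ n" for n
  proof -
    have "((- a) gchoose n) * (- z) ^ n = ((-1) ^ n * (-1) ^ n) * (pochhammer a n / fact n) * z ^ n"
      by (simp add: gbinomial_pochhammer power_minus[of z] algebra_simps)
    also have "(-1::real) ^ n * (-1) ^ n = 1"
      by (simp flip: power_mult_distrib)
    finally show ?thesis by simp
  qed
  ultimately show ?thesis by simp
qed

lemma pochhammer_1_plus_minus_prod:
  fixes s :: real
  shows "pochhammer (1 + s) n * pochhammer (1 - s) n = fact n ^ 2 * (\<Prod>k=1..n. 1 - s\<^sup>2 / real k ^ 2)"
proof (induction n)
  case (Suc n)
  have "(real n + 1) ^ 2 \<noteq> 0" by simp
  then have "(real n + 1) ^ 2 * (1 - s\<^sup>2 / (real n + 1) ^ 2) = (real n + 1) ^ 2 - s\<^sup>2"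
    by (simp add: right_diff_distrib)
  also have "\<dots> = (1 + s + real n) * (1 - s + real n)"
    by (simp add: power2_eq_square algebra_simps)
  finally have step: "(1 + s + real n) * (1 - s + real n) = (real n + 1) ^ 2 * (1 - s\<^sup>2 / (real n + 1) ^ 2)" ..
  have "pochhammer (1 + s) (Suc n) * pochhammer (1 - s) (Suc n)
      = (pochhammer (1 + s) n * pochhammer (1 - s) n) * ((1 + s + real n) * (1 - s + real n))"
    by (simp add: pochhammer_Suc algebra_simps)
  also have "\<dots> = (fact n * (real n + 1)) ^ 2 * ((1 - s\<^sup>2 / (real n + 1) ^ 2) * (\<Prod>k=1..n. 1 - s\<^sup>2 / real k ^ 2))"
    unfolding Suc.IH step by (simp add: power_mult_distrib mult_ac)
  also have "\<dots> = fact (Suc n) ^ 2 * (\<Prod>k=1..Suc n. 1 - s\<^sup>2 / real k ^ 2)"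
    by (simp add: prod.nat_ivl_Suc' algebra_simps)
  finally show ?case .
qed simp

lemma hyp2F1_11_coeff_ratio_tendsto:
  fixes s :: real
  assumes s: "0 < s" "s < 1"
  shows "(\<lambda>n. hyp2F1_11_coeff s n / (pochhammer (1 - s) n / fact n)) \<longlonglongrightarrow> s * pi / sin (pi * s)"
proof -
  have "sin (pi * s) > 0" using s by (intro sin_gt_zero) auto
  then have "(\<lambda>n. inverse (\<Prod>k=1..n. 1 - s\<^sup>2 / real k ^ 2)) \<longlonglongrightarrow> inverse (sin (pi * s) / (pi * s))"
    using s by (intro tendsto_inverse sin_product_formula_real') auto
  moreover have "hyp2F1_11_coeff s n / (pochhammer (1 - s) n / fact n) = inverse (\<Prod>k=1..n. 1 - s\<^sup>2 / real k ^ 2)" for n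
    using pochhammer_1_plus_minus_prod[of s n] pochhammer_pos[of "1 - s" n] s
    by (simp add: hyp2F1_11_coeff_def field_simps power2_eq_square)
  ultimately show ?thesis by (simp add: mult.commute)
qed

lemma hyp2F1_11_asymptotic_at_left_1:
  fixes s :: real
  assumes s: "0 < s" "s < 1"
  shows "((\<lambda>z. (1 - z) powr (1 - s) * hyp2F1 1 1 (1 + s) z) \<longlongrightarrow> s * pi / sin (pi * s)) (at_left 1)"
proof -
  have "((\<lambda>z. 1 - z) \<longlongrightarrow> (0::real)) (at_left 1)"
    by (intro tendsto_eq_intros) auto
  moreover have pos: "eventually (\<lambda>z. 0 < 1 - z) (at_left (1::real))"
    using eventually_at_left_real[OF zero_less_one] by eventually_elim auto
  ultimately have "((\<lambda>z. (1 - z) powr (1 - s)) \<longlongrightarrow> 0) (at_left (1::real))"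
    using s by (intro tendsto_zero_powrI[where b = "1 - s"] tendsto_const) (auto elim: eventually_mono)
  then have "filterlim (\<lambda>z. inverse ((1 - z) powr (1 - s))) at_top (at_left (1::real))"
    using pos by (intro filterlim_inverse_at_top) (auto elim: eventually_mono)
  then have top: "filterlim (\<lambda>z. (1 - z) powr (s - 1)) at_top (at_left (1::real))"
    by (simp add: powr_minus[symmetric])
  have "((\<lambda>z. (\<Sum>n. hyp2F1_11_coeff s n * z ^ n) / (1 - z) powr (s - 1)) \<longlongrightarrow> s * pi / sin (pi * s)) (at_left 1)"
  proof (rule power_series_ratio_tendsto_at_left_1[OF _ hyp2F1_11_coeff_ratio_tendsto[OF s] _ top])
    show "pochhammer (1 - s) n / fact n > 0" for n
      using s by (intro divide_pos_pos pochhammer_pos) auto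
    show "(\<lambda>n. pochhammer (1 - s) n / fact n * z ^ n) sums (1 - z) powr (s - 1)"
      if "0 \<le> z" "z < 1" for z
      using sums_pochhammer_div_fact_powr[of z "1 - s"] that by simp
  qed
  moreover have "inverse ((1 - z) powr (s - 1)) = (1 - z) powr (1 - s)" for z :: real
    by (simp add: powr_minus[symmetric])
  ultimately show ?thesis
    by (simp add: hyp2F1_11_eq_suminf divide_inverse mult.commute)
qed

section \<open>The log-logistic CRPS\<close>

lemma has_integral_atLeast_of_antiderivative:
  fixes f F :: "real \<Rightarrow> real"
  assumes deriv: "\<And>x. x > a \<Longrightarrow> (F has_real_derivative f x) (at x)"
    and cont: "continuous_on {a..} F"
    and nonneg: "\<And>x. x \<ge> a \<Longrightarrow> f x \<ge> 0"
    and lim: "(F \<longlongrightarrow> L) at_top"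
  shows "(f has_integral (L - F a)) {a..}"
proof -
  have ftc: "(f has_integral (F b - F a)) {a..b}" if "a \<le> b" for b
    using that deriv
    by (intro fundamental_theorem_of_calculus_interior continuous_on_subset[OF cont])
       (auto simp flip: has_real_derivative_iff_has_vector_derivative)
  show ?thesis
  proof (rule has_integral_to_inf[OF _ _ nonneg])
    show "f integrable_on {a..b}" for b
      using ftc[of b] by (cases "a \<le> b") auto
    have "eventually (\<lambda>b. F b - F a = integral {a..b} f) at_top"
      using eventually_ge_at_top[of a] by eventually_elim (metis ftc integral_unique)
    then show "((\<lambda>b. integral {a..b} f) \<longlongrightarrow> L - F a) at_top"
      by (rule Lim_transform_eventually[rotated]) (intro tendsto_diff lim tendsto_const)
  qed
qed

locale loglogistic =
  fixes p q :: real
  assumes p_gt_1: "p > 1" and q_pos: "q > 0"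
begin

definition cdf :: "real \<Rightarrow> real" where
  "cdf x = x powr p / (q powr p + x powr p)"

lemma q_powr_add_powr_pos: "x \<ge> 0 \<Longrightarrow> q powr p + x powr p > 0"
  using q_pos by (simp add: add_pos_nonneg)

lemma one_minus_cdf: "x \<ge> 0 \<Longrightarrow> 1 - cdf x = q powr p / (q powr p + x powr p)"
  using q_powr_add_powr_pos[of x] unfolding cdf_def by (simp add: field_simps)

lemma cdf_nonneg: "x \<ge> 0 \<Longrightarrow> cdf x \<ge> 0"
  using q_powr_add_powr_pos[of x] unfolding cdf_def by simp

lemma cdf_pos: "x > 0 \<Longrightarrow> cdf x > 0"
  using q_powr_add_powr_pos[of x] unfolding cdf_def by simp

lemma cdf_less_1:
  assumes "x \<ge> 0" shows "cdf x < 1"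
proof -
  have "q powr p / (q powr p + x powr p) > 0"
    using assms q_pos q_powr_add_powr_pos by simp
  then show ?thesis using one_minus_cdf[OF assms] by linarith
qed

lemma cdf_0 [simp]: "cdf 0 = 0"
  by (simp add: cdf_def)

lemma has_real_derivative_cdf:
  assumes x: "x > 0"
  shows "(cdf has_real_derivative p * cdf x * (1 - cdf x) / x) (at x)"
proof -
  have "((\<lambda>x. x powr p / (q powr p + x powr p)) has_real_derivative
      (p * x powr (p - 1) * (q powr p + x powr p) - x powr p * (p * x powr (p - 1)))
        / (q powr p + x powr p) ^ 2) (at x)"
    using x q_powr_add_powr_pos[of x]
    by (auto intro!: derivative_eq_intros simp: power2_eq_square)
  moreover have "x powr (p - 1) = x powr p / x"
    using x by (simp add: powr_diff)
  ultimately show ?thesis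
    using x q_powr_add_powr_pos[of x] unfolding cdf_def[abs_def] one_minus_cdf[OF less_imp_le[OF x]]
    by (simp add: field_simps power2_eq_square)
qed

lemma gbp_density_1_1:
  assumes x: "x > 0"
  shows "gbp_density 1 1 p q x = p * cdf x * (1 - cdf x) / x"
proof -
  define u where "u = (x / q) powr p"
  have u: "u > 0" using x q_pos by (simp add: u_def)
  have cdf_u: "cdf x = u / (1 + u)"
    using q_pos x unfolding cdf_def u_def by (simp add: powr_divide field_simps)
  have Beta_1_1: "Beta (1::real) 1 = 1"
    by (simp add: Beta_def Gamma_fact[of 1, simplified] flip: numeral_2_eq_2)
  have "gbp_density 1 1 p q x = p / q * (x / q) powr (p - 1) / (1 + u) powr 2"
    using x by (simp add: gbp_density_def Beta_1_1 u_def)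
  also have "(x / q) powr (p - 1) = u * q / x"
    using x q_pos by (simp add: u_def powr_diff)
  also have "(1 + u) powr 2 = (1 + u) ^ 2"
    using u by (simp add: powr_realpow)
  finally show ?thesis
    using x u q_pos unfolding cdf_u by (simp add: field_simps power2_eq_square)
qed

lemma continuous_on_cdf: "continuous_on {0..} cdf"
  unfolding cdf_def[abs_def] using p_gt_1 q_powr_add_powr_pos
  by (intro continuous_intros continuous_on_powr') fastforce+

lemma gbp_cdf_1_1: "gbp_cdf 1 1 p q x = (if x \<le> 0 then 0 else cdf x)"
proof (cases "x \<le> 0")
  case True
  have "(gbp_density 1 1 p q has_integral 0) {..x}"
    using True by (intro has_integral_is_0) (auto simp: gbp_density_def)
  with True show ?thesis
    unfolding gbp_cdf_def by (simp add: integral_unique)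
next
  case False
  then have x: "x > 0" by simp
  have "(gbp_density 1 1 p q has_integral (cdf x - cdf 0)) {0..x}"
    using x has_real_derivative_cdf gbp_density_1_1
    by (intro fundamental_theorem_of_calculus_interior continuous_on_subset[OF continuous_on_cdf])
       (auto simp flip: has_real_derivative_iff_has_vector_derivative)
  then have "((\<lambda>t. if t \<in> {0..x} then gbp_density 1 1 p q t else 0) has_integral cdf x) {..x}"
    by (subst has_integral_restrict) auto
  then have "(gbp_density 1 1 p q has_integral cdf x) {..x}"
    by (rule has_integral_cong[THEN iffD1, rotated]) (auto simp: gbp_density_def)
  with x show ?thesis
    unfolding gbp_cdf_def by (simp add: integral_unique)
qed

text \<open>These are \<open>\<Psi>\<close> and \<open>K\<close> from the introduction.\<close>

definition surv_int :: "real \<Rightarrow> real" where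
  "surv_int x = x * (1 - cdf x) * hyp2F1 1 1 (1 + 1 / p) (cdf x)"

definition surv_sq_int :: "real \<Rightarrow> real" where
  "surv_sq_int x = (1 - 1 / p) * surv_int x + x * (1 - cdf x) / p"

lemma has_real_derivative_x_surv:
  assumes x: "x > 0"
  shows "((\<lambda>x. x * (1 - cdf x)) has_real_derivative (1 - cdf x) * (1 - p * cdf x)) (at x)"
proof -
  have "((\<lambda>x. x * (1 - cdf x)) has_real_derivative
      1 * (1 - cdf x) + (0 - p * cdf x * (1 - cdf x) / x) * x) (at x)"
    by (intro DERIV_mult DERIV_ident DERIV_diff DERIV_const has_real_derivative_cdf x)
  then show ?thesis
    by (rule DERIV_cong) (use x in \<open>simp add: field_simps\<close>)
qed

lemma has_real_derivative_surv_int: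
  assumes x: "x > 0"
  shows "(surv_int has_real_derivative 1 - cdf x) (at x)"
proof -
  define F where "F = cdf x"
  define H where "H = hyp2F1 1 1 (1 + 1 / p)"
  have F: "0 < F" "F < 1"
    using x cdf_pos cdf_less_1 by (auto simp: F_def)
  have "(H has_real_derivative (1 / p - (1 / p - F) * H F) / (F * (1 - F))) (at F)"
    unfolding H_def using F p_gt_1 by (intro has_real_derivative_hyp2F1_11) auto
  from DERIV_chain2[OF this[unfolded F_def] has_real_derivative_cdf[OF x]]
  have "((\<lambda>x. H (cdf x)) has_real_derivative
      (1 / p - (1 / p - F) * H F) / (F * (1 - F)) * (p * F * (1 - F) / x)) (at x)"
    unfolding F_def .
  from DERIV_mult[OF has_real_derivative_x_surv[OF x] this]
  have "(surv_int has_real_derivative (1 - F) * (1 - p * F) * H F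
      + (1 / p - (1 / p - F) * H F) / (F * (1 - F)) * (p * F * (1 - F) / x) * (x * (1 - F))) (at x)"
    unfolding surv_int_def[abs_def] H_def F_def .
  moreover have "(1 - F) * (1 - p * F) * H F
      + (1 / p - (1 / p - F) * H F) / (F * (1 - F)) * (p * F * (1 - F) / x) * (x * (1 - F)) = 1 - F"
    using F x p_gt_1 by (simp add: field_simps)
  ultimately show ?thesis
    unfolding F_def by simp
qed

lemma has_real_derivative_surv_sq_int:
  assumes x: "x > 0"
  shows "(surv_sq_int has_real_derivative (1 - cdf x)\<^sup>2) (at x)"
proof -
  have "(surv_sq_int has_real_derivative
      (1 - 1 / p) * (1 - cdf x) + (1 - cdf x) * (1 - p * cdf x) / p) (at x)"
    unfolding surv_sq_int_def[abs_def]
    by (intro DERIV_add DERIV_cmult has_real_derivative_surv_int x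
          has_real_derivative_x_surv[OF x, THEN DERIV_cdivide])
  then show ?thesis
    by (rule DERIV_cong) (use p_gt_1 in \<open>simp add: field_simps power2_eq_square\<close>)
qed

lemma continuous_on_surv_int: "continuous_on {0..} surv_int"
proof -
  have "continuous_on {0..} (\<lambda>x. hyp2F1 1 1 (1 + 1 / p) (cdf x))"
  proof (rule continuous_on_compose2[OF continuous_at_imp_continuous_on continuous_on_cdf])
    show "\<forall>z\<in>{-1<..<1}. isCont (hyp2F1 1 1 (1 + 1 / p)) z"
      using p_gt_1 by (intro ballI isCont_hyp2F1_11) auto
    show "cdf ` {0..} \<subseteq> {-1<..<1}"
      using cdf_nonneg cdf_less_1 by fastforce
  qed
  then show ?thesis
    unfolding surv_int_def[abs_def] by (intro continuous_intros continuous_on_cdf)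
qed

lemma continuous_on_surv_sq_int: "continuous_on {0..} surv_sq_int"
  unfolding surv_sq_int_def[abs_def] using p_gt_1
  by (intro continuous_intros continuous_on_cdf continuous_on_surv_int) auto

lemma cdf_tendsto_1: "(cdf \<longlongrightarrow> 1) at_top"
proof -
  have "((\<lambda>x. 1 / (1 + q powr p * x powr (- p))) \<longlongrightarrow> 1 / (1 + q powr p * 0)) at_top"
    using p_gt_1 by (intro tendsto_intros tendsto_neg_powr filterlim_ident) auto
  moreover have "eventually (\<lambda>x. 1 / (1 + q powr p * x powr (- p)) = cdf x) at_top"
    using eventually_gt_at_top[of 0]
  proof eventually_elim
    case (elim x)
    then show ?case
      using q_pos unfolding cdf_def by (simp add: powr_minus field_simps)
  qed
  ultimately show ?thesis
    by (simp add: tendsto_cong)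
qed

lemma cdf_at_left_1: "filterlim cdf (at_left 1) at_top"
proof (rule tendsto_imp_filterlim_at_left[OF cdf_tendsto_1])
  show "eventually (\<lambda>x. cdf x < 1) at_top"
    using eventually_ge_at_top[of 0] by eventually_elim (rule cdf_less_1)
qed

lemma x_surv_eq_cdf_powr:
  assumes x: "x > 0"
  shows "x * (1 - cdf x) = q * (cdf x powr (1 / p) * (1 - cdf x) powr (1 - 1 / p))"
proof -
  define Q where "Q = q powr p"
  define X where "X = x powr p"
  have pos: "Q > 0" "X > 0" using q_pos x by (auto simp: Q_def X_def)
  have "cdf x powr (1 / p) = x / (Q + X) powr (1 / p)"
    using pos x p_gt_1 unfolding cdf_def Q_def[symmetric] X_def[symmetric]
    by (simp add: powr_divide X_def powr_powr)
  moreover have "(1 - cdf x) powr (1 - 1 / p) = q powr (p - 1) / (Q + X) powr (1 - 1 / p)"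
    using pos x p_gt_1 unfolding one_minus_cdf[OF less_imp_le[OF x]] Q_def[symmetric] X_def[symmetric]
    by (simp add: powr_divide Q_def powr_powr algebra_simps)
  moreover have "(Q + X) powr (1 / p) * (Q + X) powr (1 - 1 / p) = Q + X"
    using pos by (simp flip: powr_add)
  moreover have "q * q powr (p - 1) = Q"
    using q_pos by (simp add: Q_def powr_mult_base)
  ultimately have "q * (cdf x powr (1 / p) * (1 - cdf x) powr (1 - 1 / p)) = Q * x / (Q + X)"
    by (simp add: field_simps)
  then show ?thesis
    using x unfolding one_minus_cdf[OF less_imp_le[OF x]] Q_def X_def by simp
qed

lemma surv_int_tendsto: "(surv_int \<longlongrightarrow> q * (pi / p) / sin (pi / p)) at_top"
proof -
  have s: "0 < 1 / p" "1 / p < 1" using p_gt_1 by auto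
  have "((\<lambda>x. q * (cdf x powr (1 / p) *
      ((1 - cdf x) powr (1 - 1 / p) * hyp2F1 1 1 (1 + 1 / p) (cdf x))))
      \<longlongrightarrow> q * (1 powr (1 / p) * (1 / p * pi / sin (pi * (1 / p))))) at_top"
    by (intro tendsto_intros tendsto_powr' cdf_tendsto_1
          filterlim_compose[OF hyp2F1_11_asymptotic_at_left_1[OF s] cdf_at_left_1]) auto
  moreover have "eventually (\<lambda>x. q * (cdf x powr (1 / p) *
      ((1 - cdf x) powr (1 - 1 / p) * hyp2F1 1 1 (1 + 1 / p) (cdf x))) = surv_int x) at_top"
    using eventually_gt_at_top[of 0]
    by eventually_elim (simp add: surv_int_def x_surv_eq_cdf_powr)
  ultimately show ?thesis
    by (simp add: tendsto_cong)
qed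

lemma x_surv_tendsto_0: "((\<lambda>x. x * (1 - cdf x)) \<longlongrightarrow> 0) at_top"
proof -
  have "((\<lambda>x. q * (cdf x powr (1 / p) * (1 - cdf x) powr (1 - 1 / p)))
      \<longlongrightarrow> q * (1 powr (1 / p) * 0)) at_top"
  proof (intro tendsto_intros tendsto_powr' cdf_tendsto_1 tendsto_zero_powrI)
    show "((\<lambda>x. 1 - cdf x) \<longlongrightarrow> 0) at_top"
      using tendsto_diff[OF tendsto_const cdf_tendsto_1, of 1] by simp
    show "eventually (\<lambda>x. 0 \<le> 1 - cdf x) at_top"
      using eventually_ge_at_top[of 0] by eventually_elim (simp add: cdf_less_1 less_imp_le)
  qed (use p_gt_1 in auto)
  moreover have "eventually (\<lambda>x. q * (cdf x powr (1 / p) * (1 - cdf x) powr (1 - 1 / p))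
      = x * (1 - cdf x)) at_top"
    using eventually_gt_at_top[of 0] by eventually_elim (simp add: x_surv_eq_cdf_powr)
  ultimately show ?thesis
    by (simp add: tendsto_cong)
qed

lemma surv_sq_int_tendsto: "(surv_sq_int \<longlongrightarrow> (1 - 1 / p) * (q * (pi / p) / sin (pi / p))) at_top"
proof -
  have "(surv_sq_int \<longlongrightarrow> (1 - 1 / p) * (q * (pi / p) / sin (pi / p)) + 0 / p) at_top"
    unfolding surv_sq_int_def[abs_def]
    by (intro tendsto_intros surv_int_tendsto x_surv_tendsto_0) (use p_gt_1 in auto)
  then show ?thesis by simp
qed

lemma has_integral_crps:
  assumes y: "y > 0"
  shows "((\<lambda>x. (gbp_cdf 1 1 p q x - heaviside (x - y))\<^sup>2) has_integral
           y - 2 * surv_int y + (1 - 1 / p) * (q * (pi / p) / sin (pi / p))) UNIV"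
proof -
  define f where "f x = (gbp_cdf 1 1 p q x - heaviside (x - y))\<^sup>2" for x
  define L where "L = (1 - 1 / p) * (q * (pi / p) / sin (pi / p))"
  have "(f has_integral (y - 2 * surv_int y + surv_sq_int y)) {0..y}"
  proof -
    have "((\<lambda>x. x - 2 * surv_int x + surv_sq_int x) has_real_derivative f x) (at x)"
      if "0 < x" "x < y" for x
    proof -
      have "((\<lambda>x. x - 2 * surv_int x + surv_sq_int x) has_real_derivative
          1 - 2 * (1 - cdf x) + (1 - cdf x)\<^sup>2) (at x)"
        using that
        by (intro derivative_intros DERIV_cmult has_real_derivative_surv_int has_real_derivative_surv_sq_int)
      moreover have "1 - 2 * (1 - cdf x) + (1 - cdf x)\<^sup>2 = f x"
        using that by (simp add: f_def gbp_cdf_1_1 heaviside_def power2_eq_square algebra_simps)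
      ultimately show ?thesis by simp
    qed
    moreover have cont: "continuous_on {0..} (\<lambda>x. x - 2 * surv_int x + surv_sq_int x)"
      by (intro continuous_intros continuous_on_surv_int continuous_on_surv_sq_int)
    ultimately have "(f has_integral (y - 2 * surv_int y + surv_sq_int y) - (0 - 2 * surv_int 0 + surv_sq_int 0)) {0..y}"
      using y
      by (intro fundamental_theorem_of_calculus_interior continuous_on_subset[OF cont])
         (auto simp flip: has_real_derivative_iff_has_vector_derivative)
    then show ?thesis
      by (simp add: surv_int_def surv_sq_int_def)
  qed
  moreover have "(f has_integral (L - surv_sq_int y)) {y..}"
    unfolding L_def
  proof (rule has_integral_atLeast_of_antiderivative[OF _ _ _ surv_sq_int_tendsto])
    show "(surv_sq_int has_real_derivative f x) (at x)" if "y < x" for x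
      using has_real_derivative_surv_sq_int[of x] that y
      by (simp add: f_def gbp_cdf_1_1 heaviside_def power2_commute)
    show "continuous_on {y..} surv_sq_int"
      using y by (intro continuous_on_subset[OF continuous_on_surv_sq_int]) auto
  qed (simp add: f_def)
  ultimately have "(f has_integral (y - 2 * surv_int y + surv_sq_int y) + (L - surv_sq_int y)) ({0..y} \<union> {y..})"
    by (intro has_integral_Un) (auto intro: negligible_subset[OF negligible_sing[of y]])
  moreover have "{0..y} \<union> {y..} = {0..}"
    using y by auto
  ultimately have "(f has_integral (y - 2 * surv_int y + L)) {0..}"
    by (simp add: algebra_simps)
  then have "(f has_integral (y - 2 * surv_int y + L)) UNIV"
    by (rule has_integral_on_superset) (use y in \<open>auto simp: f_def gbp_cdf_1_1 heaviside_def\<close>)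
  then show ?thesis
    unfolding f_def L_def .
qed

end

theorem mainTheorem7:
  fixes p q y :: real
  assumes "p > 1" and "q > 0" and "y > 0"
  shows "((\<lambda>x. (gbp_cdf 1 1 p q x - heaviside (x - y))\<^sup>2) has_integral
           ((p - 1) / p\<^sup>2 * (q * pi / sin (pi / p))
            + y * (1 - 2 * q powr p / (q powr p + y powr p)
                       * hyp2F1 1 1 (1 + 1 / p) (y powr p / (q powr p + y powr p))))) UNIV"
proof -
  interpret loglogistic p q
    using assms by unfold_locales
  have "surv_int y = y * (q powr p / (q powr p + y powr p))
                       * hyp2F1 1 1 (1 + 1 / p) (y powr p / (q powr p + y powr p))"
    unfolding surv_int_def one_minus_cdf[OF less_imp_le[OF assms(3)]] by (simp add: cdf_def)
  moreover have "(1 - 1 / p) * (q * (pi / p) / sin (pi / p)) = (p - 1) / p\<^sup>2 * (q * pi / sin (pi / p))"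
    using assms by (simp add: field_simps power2_eq_square)
  ultimately have "y - 2 * surv_int y + (1 - 1 / p) * (q * (pi / p) / sin (pi / p))
      = (p - 1) / p\<^sup>2 * (q * pi / sin (pi / p))
        + y * (1 - 2 * q powr p / (q powr p + y powr p)
                   * hyp2F1 1 1 (1 + 1 / p) (y powr p / (q powr p + y powr p)))"
    by (simp only:) (simp add: right_diff_distrib)
  with has_integral_crps[OF assms(3)] show ?thesis
    by simp
qed

end
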